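(* There exists a smallest (for inclusion) shell-complete category of cubes.
   Context: $[0]=\{()\}$, $[n]=\{0,1\}^n$ ($n\ge1$) with the product order; ${\rm PoSet}$ is posets with strictly increasing maps. Face maps $\delta_i^\alpha:[n-1]\to[n]$ insert $\alpha\in\{0,1\}$ at position $i$; $\square$ is the subcategory of ${\rm PoSet}$ with objects $[n]$ generated by face maps. A map $[m]\to[n]$ is adjacency-preserving if strictly increasing and sends pairs at Hamming distance $1$ to pairs at Hamming distance $1$. A category of cubes is a subcategory $\mathcal A\subset{\rm PoSet}$ with objects $\{[n]:n\ge0\}$, containing $\square$, whose morphisms are adjacency-preserving. An $\mathcal A$-set is a presheaf on $\mathcal A$, $\mathcal A[p]=\mathcal A(-,[p])$, and $\mathrm{cosk}_1^{\mathcal A}$ is the right adjoint of the truncation $K\mapsto K_{\le1}$ to presheaves on the full subcategory on $[0],[1]$. $\mathcal A$ is shell-complete if for every $p\ge2$ the canonical map $\mathcal A[p]\to\mathrm{cosk}_1^{\mathcal A}(\mathcal A[p]_{\le1})$ is an isomorphism. *)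

theory Defs
  imports "HOL-Library.FuncSet"
begin

(* The cube [n] = {0,1}^n, points encoded as boolean lists of length n
   (False = 0, True = 1); [0] = {[]} is the one-point poset. *)
definition cube :: "nat \<Rightarrow> bool list set" where
  "cube n = {x. length x = n}"

definition cube_le :: "bool list \<Rightarrow> bool list \<Rightarrow> bool" where
  "cube_le x y \<longleftrightarrow> length x = length y \<and> (\<forall>i<length x. x ! i \<le> y ! i)"

definition cube_less :: "bool list \<Rightarrow> bool list \<Rightarrow> bool" where
  "cube_less x y \<longleftrightarrow> cube_le x y \<and> x \<noteq> y"

definition hamming :: "bool list \<Rightarrow> bool list \<Rightarrow> nat" where
  "hamming x y = card {i. i < length x \<and> x ! i \<noteq> y ! i}"

(* A morphism [m] -> [n] is represented by an extensional function on cube m *)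
type_synonym cmor = "bool list \<Rightarrow> bool list"

(* strictly increasing maps [m] -> [n] (the morphisms of PoSet) *)
definition strict_incr :: "nat \<Rightarrow> nat \<Rightarrow> cmor \<Rightarrow> bool" where
  "strict_incr m n f \<longleftrightarrow> f \<in> cube m \<rightarrow>\<^sub>E cube n \<and>
     (\<forall>x\<in>cube m. \<forall>y\<in>cube m. cube_less x y \<longrightarrow> cube_less (f x) (f y))"

definition adj_preserving :: "nat \<Rightarrow> nat \<Rightarrow> cmor \<Rightarrow> bool" where
  "adj_preserving m n f \<longleftrightarrow> strict_incr m n f \<and>
     (\<forall>x\<in>cube m. \<forall>y\<in>cube m. hamming x y = 1 \<longrightarrow> hamming (f x) (f y) = 1)"

definition cid :: "nat \<Rightarrow> cmor" where
  "cid n = restrict id (cube n)"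

definition ccomp :: "nat \<Rightarrow> cmor \<Rightarrow> cmor \<Rightarrow> cmor" where
  "ccomp l g f = compose (cube l) g f"

(* face map delta_i^alpha : [n] -> [n+1], inserting alpha at position i (0-based, i \<le> n) *)
definition face :: "nat \<Rightarrow> nat \<Rightarrow> bool \<Rightarrow> cmor" where
  "face n i \<alpha> = restrict (\<lambda>x. take i x @ \<alpha> # drop i x) (cube n)"

inductive box_mor :: "nat \<Rightarrow> nat \<Rightarrow> cmor \<Rightarrow> bool" where
  box_id: "box_mor n n (cid n)"
| box_face: "i \<le> n \<Longrightarrow> box_mor n (Suc n) (face n i \<alpha>)"
| box_comp: "box_mor l m f \<Longrightarrow> box_mor m n g \<Longrightarrow> box_mor l n (ccomp l g f)"

(* A category of cubes is given by its hom-sets A m n \<subseteq> PoSet([m],[n]) *)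
definition cat_of_cubes :: "(nat \<Rightarrow> nat \<Rightarrow> cmor set) \<Rightarrow> bool" where
  "cat_of_cubes A \<longleftrightarrow>
     (\<forall>m n. \<forall>f\<in>A m n. strict_incr m n f \<and> adj_preserving m n f) \<and>
     (\<forall>n. cid n \<in> A n n) \<and>
     (\<forall>l m n. \<forall>f\<in>A l m. \<forall>g\<in>A m n. ccomp l g f \<in> A l n) \<and>
     (\<forall>m n f. box_mor m n f \<longrightarrow> f \<in> A m n)"

(* Morphisms A[n]_{\<le>1} -> A[p]_{\<le>1} of presheaves on the full subcategory of A
   on [0],[1]: families (phi_0, phi_1), phi_k : A(k,n) -> A(k,p), natural in all
   morphisms u \<in> A(i,j), i,j \<le> 1.  (cosk_1(X)_n = Hom(A[n]_{\<le>1}, X).) *)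
definition trunc_nat :: "(nat \<Rightarrow> nat \<Rightarrow> cmor set) \<Rightarrow> nat \<Rightarrow> nat \<Rightarrow> (nat \<Rightarrow> cmor \<Rightarrow> cmor) \<Rightarrow> bool" where
  "trunc_nat A n p \<phi> \<longleftrightarrow>
     \<phi> \<in> extensional {0, 1} \<and>
     (\<forall>k\<le>1. \<phi> k \<in> A k n \<rightarrow>\<^sub>E A k p) \<and>
     (\<forall>i\<le>1. \<forall>j\<le>1. \<forall>u\<in>A i j. \<forall>x\<in>A j n.
        \<phi> i (ccomp i x u) = ccomp i (\<phi> j x) u)"

(* level n of the canonical (unit) map A[p] -> cosk_1(A[p]_{\<le>1}):
   f \<mapsto> the restriction of the Yoneda map f \<circ> - to levels 0,1 *)
definition cosk_unit :: "(nat \<Rightarrow> nat \<Rightarrow> cmor set) \<Rightarrow> nat \<Rightarrow> cmor \<Rightarrow> (nat \<Rightarrow> cmor \<Rightarrow> cmor)" where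
  "cosk_unit A n f = restrict (\<lambda>k. restrict (\<lambda>x. ccomp k f x) (A k n)) {0, 1}"

definition shell_complete :: "(nat \<Rightarrow> nat \<Rightarrow> cmor set) \<Rightarrow> bool" where
  "shell_complete A \<longleftrightarrow>
     (\<forall>p\<ge>2. \<forall>n. bij_betw (cosk_unit A n) (A n p) {\<phi>. trunc_nat A n p \<phi>})"

end

theory Submission
  imports Defs
begin

text \<open>Every category of cubes contains the face maps, hence all points \<open>[0] \<rightarrow> [n]\<close> and all
  edges \<open>[1] \<rightarrow> [n]\<close>; so on the objects \<open>[0]\<close> and \<open>[1]\<close> it coincides with the category of
  all adjacency-preserving maps. A morphism between the 1-truncations of \<open>A[n]\<close> and \<open>A[p]\<close> is
  then a map of vertices sending edges to edges, and such a map is adjacency-preserving because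
  strict monotonicity propagates along monotone edge paths. Hence the category of all
  adjacency-preserving maps is shell-complete, and shell-completeness forces every category of
  cubes to contain all adjacency-preserving maps \<open>[m] \<rightarrow> [p]\<close> with \<open>p \<ge> 2\<close>; into \<open>[0]\<close> and
  \<open>[1]\<close> there are no adjacency-preserving maps from \<open>[m]\<close> with \<open>m \<ge> 2\<close> at all.\<close>

lemma cube_0: "cube 0 = {[]}"
  by (auto simp: cube_def)

lemma cube_1: "cube 1 = {[False], [True]}" "cube (Suc 0) = {[False], [True]}"
proof -
  have "x \<in> {[False], [True]}" if "length x = 1" for x
  proof -
    obtain b where "x = [b]" using \<open>length x = 1\<close> by (auto simp: length_Suc_conv)
    then show ?thesis by (cases b) auto
  qed
  then show "cube 1 = {[False], [True]}" by (auto simp: cube_def)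
  then show "cube (Suc 0) = {[False], [True]}" by simp
qed

lemma cube_le_iff_list_all2: "cube_le x y \<longleftrightarrow> list_all2 (\<le>) x y"
  by (auto simp: cube_le_def list_all2_conv_all_nth)

lemma cube_le_refl: "cube_le x x"
  by (simp add: cube_le_iff_list_all2 list_all2_refl)

lemma cube_le_trans: "cube_le x y \<Longrightarrow> cube_le y z \<Longrightarrow> cube_le x z"
  unfolding cube_le_def by (metis order_trans)

lemma cube_le_antisym: "cube_le x y \<Longrightarrow> cube_le y x \<Longrightarrow> x = y"
  by (auto simp: cube_le_def intro!: nth_equalityI)

lemma cube_less_le_trans: "cube_less x y \<Longrightarrow> cube_le y z \<Longrightarrow> cube_less x z"
  unfolding cube_less_def using cube_le_trans cube_le_antisym by blast

lemma cube_less_False_True: "cube_less [False] [True]"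
  by (simp add: cube_less_def cube_le_def)

lemma not_cube_le_True_False: "\<not> cube_le [True] [False]"
  by (simp add: cube_le_def)

lemma hamming_eq_length_filter:
  "length x = length y \<Longrightarrow> hamming x y = length (filter (\<lambda>(a, b). a \<noteq> b) (zip x y))"
  unfolding hamming_def length_filter_conv_card
  by (auto intro!: arg_cong[where f = card] simp: nth_zip)

lemma hamming_self: "hamming x x = 0"
  by (simp add: hamming_def)

lemma hamming_commute: "length x = length y \<Longrightarrow> hamming x y = hamming y x"
  unfolding hamming_def by (metis (no_types, lifting) Collect_cong)

lemma hamming_False_True: "hamming [False] [True] = 1" "hamming [True] [False] = 1"
  by (simp_all add: hamming_eq_length_filter)

lemma hamming_eq_1_iff:
  assumes "length x = length y"
  shows "hamming x y = 1 \<longleftrightarrow>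
    (\<exists>i<length x. x ! i \<noteq> y ! i \<and> (\<forall>j<length x. j \<noteq> i \<longrightarrow> x ! j = y ! j))"
    (is "_ \<longleftrightarrow> ?single")
proof -
  have "hamming x y = 1 \<longleftrightarrow> (\<exists>i. {i. i < length x \<and> x ! i \<noteq> y ! i} = {i})"
    unfolding hamming_def One_nat_def by (rule card_1_singleton_iff)
  also have "\<dots> \<longleftrightarrow> ?single"
    by (auto simp: set_eq_iff)
  finally show ?thesis .
qed

definition insert_at :: "nat \<Rightarrow> bool \<Rightarrow> bool list \<Rightarrow> bool list" where
  "insert_at i a x = take i x @ a # drop i x"

lemma length_insert_at [simp]: "length (insert_at i a x) = Suc (length x)"
  by (simp add: insert_at_def)

lemma cube_le_insert_at: "cube_le x y \<Longrightarrow> cube_le (insert_at i a x) (insert_at i a y)"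
  unfolding cube_le_iff_list_all2 insert_at_def
  by (intro list_all2_appendI list_all2_takeI list_all2_dropI list_all2_Cons[THEN iffD2]) auto

lemma insert_at_inj: "length x = length y \<Longrightarrow> insert_at i a x = insert_at i a y \<Longrightarrow> x = y"
  unfolding insert_at_def by (metis append_eq_append_conv append_take_drop_id length_take list.inject)

lemma hamming_insert_at:
  assumes "length x = length y"
  shows "hamming (insert_at i a x) (insert_at i a y) = hamming x y"
proof -
  let ?P = "\<lambda>(a :: bool, b). a \<noteq> b"
  have "zip x y = zip (take i x) (take i y) @ zip (drop i x) (drop i y)"
    using assms by (metis append_take_drop_id length_take zip_append)
  moreover have "zip (insert_at i a x) (insert_at i a y) =
      zip (take i x) (take i y) @ (a, a) # zip (drop i x) (drop i y)"
    unfolding insert_at_def using assms by (subst zip_append) auto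
  ultimately have "filter ?P (zip (insert_at i a x) (insert_at i a y)) = filter ?P (zip x y)"
    by simp
  then show ?thesis
    using assms by (simp add: hamming_eq_length_filter)
qed

section \<open>The category of all adjacency-preserving maps\<close>

definition adj_hom :: "nat \<Rightarrow> nat \<Rightarrow> cmor set" where
  "adj_hom m n = {f. adj_preserving m n f}"

lemma adj_preserving_in_cube: "adj_preserving m n f \<Longrightarrow> x \<in> cube m \<Longrightarrow> f x \<in> cube n"
  by (auto simp: adj_preserving_def strict_incr_def)

lemma adj_preserving_undefined: "adj_preserving m n f \<Longrightarrow> x \<notin> cube m \<Longrightarrow> f x = undefined"
  by (auto simp: adj_preserving_def strict_incr_def PiE_iff extensional_def)

lemma adj_preserving_cid: "adj_preserving n n (cid n)"
  by (auto simp: adj_preserving_def strict_incr_def cid_def)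

lemma adj_preserving_ccomp:
  "adj_preserving l m f \<Longrightarrow> adj_preserving m n g \<Longrightarrow> adj_preserving l n (ccomp l g f)"
  unfolding ccomp_def adj_preserving_def strict_incr_def compose_def by (auto simp: PiE_iff)

lemma face_eq_insert_at: "face n i a = restrict (insert_at i a) (cube n)"
  unfolding face_def insert_at_def ..

lemma adj_preserving_face: "adj_preserving n (Suc n) (face n i a)"
  unfolding face_eq_insert_at adj_preserving_def strict_incr_def
  using cube_le_insert_at insert_at_inj hamming_insert_at
  by (auto simp: cube_def cube_less_def)

lemma box_mor_adj_preserving: "box_mor m n f \<Longrightarrow> adj_preserving m n f"
  by (induction rule: box_mor.induct)
    (auto intro: adj_preserving_cid adj_preserving_face adj_preserving_ccomp)

lemma cat_of_cubes_adj_hom: "cat_of_cubes adj_hom"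
  unfolding cat_of_cubes_def adj_hom_def
  using adj_preserving_cid adj_preserving_ccomp box_mor_adj_preserving
  by (auto simp: adj_preserving_def)

lemma cat_of_cubes_subset_adj_hom: "cat_of_cubes A \<Longrightarrow> A m n \<subseteq> adj_hom m n"
  unfolding cat_of_cubes_def adj_hom_def by blast

definition point :: "bool list \<Rightarrow> cmor" where
  "point v = restrict (\<lambda>_. v) (cube 0)"

definition edge :: "bool list \<Rightarrow> bool list \<Rightarrow> cmor" where
  "edge x y = restrict (\<lambda>b. if hd b then y else x) (cube 1)"

lemma point_Nil [simp]: "point v [] = v"
  by (simp add: point_def cube_0)

lemma adj_preserving_from_0: "adj_preserving 0 n f \<Longrightarrow> f = point (f []) \<and> f [] \<in> cube n"
  unfolding adj_preserving_def strict_incr_def point_def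
  by (auto simp: cube_0 PiE_iff extensional_def)

lemma adj_preserving_point: "v \<in> cube n \<Longrightarrow> adj_preserving 0 n (point v)"
  unfolding adj_preserving_def strict_incr_def point_def
  by (auto simp: cube_0 cube_less_def hamming_def)

lemma adj_preserving_from_1:
  assumes f: "adj_preserving 1 n f"
  shows "f = edge (f [False]) (f [True]) \<and> cube_less (f [False]) (f [True]) \<and>
    hamming (f [False]) (f [True]) = 1 \<and> f [False] \<in> cube n \<and> f [True] \<in> cube n"
proof -
  have "f b = edge (f [False]) (f [True]) b" for b
  proof (cases "b \<in> cube 1")
    case True
    then show ?thesis by (auto simp: edge_def cube_1)
  next
    case False
    then show ?thesis using adj_preserving_undefined[OF f] by (simp add: edge_def)
  qed
  moreover have c: "[False] \<in> cube 1" "[True] \<in> cube 1" by (auto simp: cube_1)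
  moreover have "cube_less (f [False]) (f [True]) \<and> hamming (f [False]) (f [True]) = 1"
    using f c cube_less_False_True hamming_False_True
    unfolding adj_preserving_def strict_incr_def by blast
  ultimately show ?thesis using adj_preserving_in_cube[OF f] by blast
qed

lemma adj_preserving_edge:
  "x \<in> cube n \<Longrightarrow> y \<in> cube n \<Longrightarrow> cube_less x y \<Longrightarrow> hamming x y = 1 \<Longrightarrow>
    adj_preserving 1 n (edge x y)"
  unfolding adj_preserving_def strict_incr_def edge_def One_nat_def cube_1(2)
  using hamming_commute[of x y] cube_less_False_True hamming_False_True
  by (auto simp: cube_less_def cube_def hamming_self not_cube_le_True_False)

lemma box_mor_point: "box_mor 0 (length v) (point v)"
proof (induction v)
  case Nil
  have "point [] = cid 0" by (auto simp: point_def cid_def cube_0)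
  then show ?case using box_id[of 0] by simp
next
  case (Cons b v)
  have "point (b # v) = ccomp 0 (face (length v) 0 b) (point v)"
    by (auto simp: point_def ccomp_def face_def cube_0 compose_def cube_def)
  then show ?case using box_comp[OF Cons.IH box_face[of 0 "length v" b]] by simp
qed

lemma box_mor_edge_insert_at:
  assumes "box_mor 1 n (edge x y)" "x \<in> cube n" "y \<in> cube n" "i \<le> n"
  shows "box_mor 1 (Suc n) (edge (insert_at i b x) (insert_at i b y))"
proof -
  have "edge (insert_at i b x) (insert_at i b y) = ccomp 1 (face n i b) (edge x y)"
    using assms(2,3) by (auto simp: edge_def ccomp_def face_eq_insert_at cube_1 compose_def)
  then show ?thesis using box_comp[OF assms(1) box_face[OF assms(4)]] by simp
qed

lemma box_mor_edge_Cons: "box_mor 1 (Suc (length c)) (edge (False # c) (True # c))"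
proof (induction c)
  case Nil
  have "edge [False] [True] = cid 1" by (auto simp: edge_def cid_def cube_1)
  then show ?case using box_id[of 1] by simp
next
  case (Cons b c)
  from box_mor_edge_insert_at[OF Cons.IH, of 1 b]
  show ?case by (simp add: cube_def insert_at_def)
qed

lemma box_mor_edge_append:
  "box_mor 1 (length a + Suc (length c)) (edge (a @ False # c) (a @ True # c))"
proof (induction a)
  case Nil
  then show ?case using box_mor_edge_Cons by simp
next
  case (Cons b a)
  from box_mor_edge_insert_at[OF Cons.IH, of 0 b]
  show ?case by (simp add: cube_def insert_at_def)
qed

lemma box_mor_edge:
  assumes "x \<in> cube n" "y \<in> cube n" "cube_le x y" "hamming x y = 1"
  shows "box_mor 1 n (edge x y)"
proof -
  have l: "length x = n" "length y = n" using assms by (auto simp: cube_def)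
  obtain i where i: "i < n" "x ! i \<noteq> y ! i" and same: "\<forall>j<n. j \<noteq> i \<longrightarrow> x ! j = y ! j"
    using assms(4) hamming_eq_1_iff[of x y] l by auto
  have xi: "x ! i = False" "y ! i = True" using assms(3) i l unfolding cube_le_def by auto
  have "take i y = take i x" "drop (Suc i) y = drop (Suc i) x"
    using same l i by (auto intro!: nth_equalityI)
  then have "x = take i x @ False # drop (Suc i) x" "y = take i x @ True # drop (Suc i) x"
    using id_take_nth_drop[of i x] id_take_nth_drop[of i y] i l xi by simp_all
  moreover have "n = length (take i x) + Suc (length (drop (Suc i) x))" using i l by simp
  ultimately show ?thesis using box_mor_edge_append[of "take i x" "drop (Suc i) x"] by metis
qed

lemma cat_of_cubes_low_dim_eq:
  assumes A: "cat_of_cubes A" and k: "k \<le> 1"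
  shows "A k n = adj_hom k n"
proof
  show "A k n \<subseteq> adj_hom k n" using cat_of_cubes_subset_adj_hom[OF A] .
next
  have box: "\<And>f. box_mor k n f \<Longrightarrow> f \<in> A k n" using A unfolding cat_of_cubes_def by blast
  show "adj_hom k n \<subseteq> A k n"
  proof
    fix f assume "f \<in> adj_hom k n"
    then have f: "adj_preserving k n f" by (simp add: adj_hom_def)
    show "f \<in> A k n"
    proof (cases "k = 0")
      case True
      then show ?thesis
        using adj_preserving_from_0 f box_mor_point[of "f []"] box by (simp add: cube_def)
    next
      case False
      then have "k = 1" using k by simp
      then show ?thesis
        using adj_preserving_from_1 f box_mor_edge box by (metis cube_less_def)
    qed
  qed
qed

lemma adj_preserving_target_le_1:
  assumes f: "adj_preserving n p f" and p: "p \<le> 1"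
  shows "n \<le> 1"
proof (rule ccontr)
  assume "\<not> n \<le> 1"
  then have "\<exists>m. n = Suc (Suc m)" by presburger
  then obtain m where n: "n = Suc (Suc m)" ..
  define r where "r = replicate m False"
  define x0 x1 x2 where "x0 = False # False # r" and "x1 = True # False # r"
    and "x2 = True # True # r"
  have "x0 \<in> cube n" "x1 \<in> cube n" "x2 \<in> cube n"
    by (auto simp: cube_def n x0_def x1_def x2_def r_def)
  moreover have "cube_less x0 x1" "cube_less x1 x2"
    unfolding cube_less_def cube_le_iff_list_all2 x0_def x1_def x2_def
    by (auto intro: list_all2_refl)
  ultimately have "cube_less (f x0) (f x1)" "cube_less (f x1) (f x2)"
    "f x0 \<in> cube p" "f x1 \<in> cube p" "f x2 \<in> cube p"
    using f unfolding adj_preserving_def strict_incr_def by blast+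
  moreover have "cube p \<subseteq> {[], [False], [True]}" using p by (cases p) (auto simp: cube_0 cube_1)
  ultimately have "f x0 \<in> {[], [False], [True]}" "f x1 \<in> {[], [False], [True]}"
    "f x2 \<in> {[], [False], [True]}"
    and "cube_less (f x0) (f x1)" "cube_less (f x1) (f x2)"
    by blast+
  then show False using not_cube_le_True_False by (auto simp: cube_less_def cube_le_def)
qed

section \<open>Adjacency is detected on edges\<close>

lemma cube_le_image_of_edges:
  assumes E: "\<And>x z. x \<in> cube n \<Longrightarrow> z \<in> cube n \<Longrightarrow> cube_le x z \<Longrightarrow> hamming x z = 1 \<Longrightarrow>
      cube_less (f x) (f z)"
  shows "x \<in> cube n \<Longrightarrow> y \<in> cube n \<Longrightarrow> cube_le x y \<Longrightarrow> hamming x y = d \<Longrightarrow>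
    cube_le (f x) (f y) \<and> (0 < d \<longrightarrow> cube_less (f x) (f y))"
proof (induction d arbitrary: x)
  case 0
  then have "x = y" by (auto simp: cube_def cube_le_def hamming_def intro!: nth_equalityI)
  then show ?case by (simp add: cube_le_refl)
next
  case (Suc d x)
  let ?D = "{i. i < length x \<and> x ! i \<noteq> y ! i}"
  have l: "length x = n" "length y = n" using Suc.prems by (auto simp: cube_def)
  obtain i where i: "i \<in> ?D"
    using Suc.prems(4) unfolding hamming_def by (metis card.empty ex_in_conv nat.distinct(1))
  then have xi: "x ! i = False" "y ! i = True" using Suc.prems(3) unfolding cube_le_def by auto
  \<comment> \<open>flip the coordinate \<open>i\<close> of \<open>x\<close> to walk one step towards \<open>y\<close>\<close>
  define z where "z = x[i := True]"
  have z: "z \<in> cube n" using l by (simp add: z_def cube_def)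
  have "{j. j < length z \<and> z ! j \<noteq> y ! j} = ?D - {i}"
    using xi i by (auto simp: z_def nth_list_update)
  then have "hamming z y = card (?D - {i})" unfolding hamming_def by argo
  also have "\<dots> = d" using Suc.prems(4) i by (simp add: hamming_def card_Diff_singleton)
  finally have "hamming z y = d" .
  moreover have "cube_le x z" "cube_le z y"
    using Suc.prems(3) i xi by (auto simp: z_def cube_le_def nth_list_update)
  moreover have "hamming x z = 1"
    using i xi by (subst hamming_eq_1_iff) (auto simp: z_def nth_list_update)
  ultimately have "cube_less (f x) (f z)" "cube_le (f z) (f y)"
    using E[OF Suc.prems(1) z] Suc.IH[OF z Suc.prems(2)] by blast+
  then have "cube_less (f x) (f y)" by (rule cube_less_le_trans)
  then show ?case by (simp add: cube_less_def)
qed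

lemma adj_preservingI_edges:
  assumes F: "f \<in> cube n \<rightarrow>\<^sub>E cube p"
    and E: "\<And>x z. x \<in> cube n \<Longrightarrow> z \<in> cube n \<Longrightarrow> cube_le x z \<Longrightarrow> hamming x z = 1 \<Longrightarrow>
      cube_less (f x) (f z) \<and> hamming (f x) (f z) = 1"
  shows "adj_preserving n p f"
  unfolding adj_preserving_def strict_incr_def
proof (intro conjI ballI impI F)
  fix x y assume x: "x \<in> cube n" and y: "y \<in> cube n" and "cube_less x y"
  then have "cube_le x y" "x \<noteq> y" by (auto simp: cube_less_def)
  moreover from this have "0 < hamming x y"
    using x y by (auto simp: cube_def hamming_def card_gt_0_iff intro: nth_equalityI)
  ultimately show "cube_less (f x) (f y)"
    using cube_le_image_of_edges[of n f, OF _ x y] E by blast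
next
  fix x y assume x: "x \<in> cube n" and y: "y \<in> cube n" and h: "hamming x y = 1"
  have l: "length x = n" "length y = n" "length (f x) = p" "length (f y) = p"
    using F x y by (auto simp: cube_def PiE_iff)
  obtain i where i: "i < n" "x ! i \<noteq> y ! i" and same: "\<forall>j<n. j \<noteq> i \<longrightarrow> x ! j = y ! j"
    using h hamming_eq_1_iff[of x y] l by auto
  show "hamming (f x) (f y) = 1"
  proof (cases "x ! i")
    case False
    then have "cube_le x y" using same i l by (auto simp: cube_le_def)
    then show ?thesis using E[OF x y _ h] by blast
  next
    case True
    then have "cube_le y x" using same i l by (auto simp: cube_le_def)
    then show ?thesis using E[OF y x] h hamming_commute l by metis
  qed
qed

section \<open>The coskeleton condition\<close>

lemma trunc_nat_cong:
  "(\<And>k m. k \<le> 1 \<Longrightarrow> A k m = B k m) \<Longrightarrow> trunc_nat A n p = trunc_nat B n p"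
  unfolding trunc_nat_def by (intro ext) simp

lemma cosk_unit_cong:
  assumes "\<And>k m. k \<le> 1 \<Longrightarrow> A k m = B k m"
  shows "cosk_unit A n = cosk_unit B n"
proof
  fix f
  have "restrict (\<lambda>x. ccomp k f x) (A k n) = restrict (\<lambda>x. ccomp k f x) (B k n)"
    if "k \<in> {0, 1}" for k
    using assms[of k n] that by auto
  then show "cosk_unit A n f = cosk_unit B n f"
    unfolding cosk_unit_def by (intro restrict_ext) simp
qed

lemma ccomp_apply: "x \<in> cube k \<Longrightarrow> ccomp k g f x = g (f x)"
  by (simp add: ccomp_def compose_def)

lemma ccomp_undefined: "x \<notin> cube k \<Longrightarrow> ccomp k g f x = undefined"
  by (simp add: ccomp_def compose_def)

lemma ccomp_point: "ccomp 0 f (point v) = point (f v)"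
  by (auto simp: ccomp_def compose_def point_def cube_0)

lemma inj_on_cosk_unit:
  assumes A: "cat_of_cubes A"
  shows "inj_on (cosk_unit A n) (A n p)"
proof (rule inj_onI)
  fix f g assume f: "f \<in> A n p" and g: "g \<in> A n p" and eq: "cosk_unit A n f = cosk_unit A n g"
  have f': "adj_preserving n p f" and g': "adj_preserving n p g"
    using f g cat_of_cubes_subset_adj_hom[OF A] by (auto simp: adj_hom_def)
  show "f = g"
  proof
    fix x show "f x = g x"
    proof (cases "x \<in> cube n")
      case True
      then have "point x \<in> A 0 n"
        using cat_of_cubes_low_dim_eq[OF A] adj_preserving_point by (simp add: adj_hom_def)
      then have "ccomp 0 f (point x) = ccomp 0 g (point x)"
        using fun_cong[OF fun_cong[OF eq, of 0], of "point x"] by (simp add: cosk_unit_def)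
      then show ?thesis by (metis ccomp_point point_Nil)
    next
      case False
      then show ?thesis using adj_preserving_undefined[OF f'] adj_preserving_undefined[OF g'] by simp
    qed
  qed
qed

lemma trunc_nat_cosk_unit:
  assumes A: "cat_of_cubes A" and f: "f \<in> A n p"
  shows "trunc_nat A n p (cosk_unit A n f)"
  unfolding trunc_nat_def
proof (intro conjI allI impI ballI)
  show "cosk_unit A n f \<in> extensional {0, 1}" by (simp add: cosk_unit_def)
next
  fix k :: nat assume "k \<le> 1"
  then show "cosk_unit A n f k \<in> A k n \<rightarrow>\<^sub>E A k p"
    using A f unfolding cat_of_cubes_def by (auto simp: cosk_unit_def)
next
  fix i j :: nat and u x assume "i \<le> 1" "j \<le> 1" and u: "u \<in> A i j" and x: "x \<in> A j n"
  have "ccomp i x u \<in> A i n" using A u x unfolding cat_of_cubes_def by blast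
  moreover have "adj_preserving i j u"
    using u cat_of_cubes_subset_adj_hom[OF A] by (auto simp: adj_hom_def)
  then have "u \<in> cube i \<rightarrow> cube j" using adj_preserving_in_cube by blast
  then have "ccomp i f (ccomp i x u) = ccomp i (ccomp j f x) u"
    unfolding ccomp_def by (rule compose_assoc)
  ultimately show "cosk_unit A n f i (ccomp i x u) = ccomp i (cosk_unit A n f j x) u"
    using \<open>i \<le> 1\<close> \<open>j \<le> 1\<close> x by (auto simp: cosk_unit_def)
qed

lemma trunc_nat_apply:
  assumes A: "cat_of_cubes A" and \<phi>: "trunc_nat A n p \<phi>"
    and k: "k \<le> 1" and v: "v \<in> A k n" and b: "b \<in> cube k"
  shows "\<phi> k v b = \<phi> 0 (point (v b)) []"
proof -
  have "point b \<in> A 0 k"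
    using b cat_of_cubes_low_dim_eq[OF A] adj_preserving_point by (simp add: adj_hom_def)
  \<comment> \<open>naturality of \<open>\<phi>\<close> with respect to the vertex \<open>b\<close> of \<open>[k]\<close>\<close>
  then have "\<phi> 0 (ccomp 0 v (point b)) = ccomp 0 (\<phi> k v) (point b)"
    using \<phi> k v unfolding trunc_nat_def by simp
  then show ?thesis by (metis ccomp_point point_Nil)
qed

lemma cosk_unit_adj_hom_onto:
  assumes \<phi>: "trunc_nat adj_hom n p \<phi>"
  shows "\<phi> \<in> cosk_unit adj_hom n ` adj_hom n p"
proof -
  have ext: "\<phi> \<in> extensional {0, 1}" and hom: "\<And>k. k \<le> 1 \<Longrightarrow> \<phi> k \<in> adj_hom k n \<rightarrow>\<^sub>E adj_hom k p"
    using \<phi> unfolding trunc_nat_def by auto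
  note apply_\<phi> = trunc_nat_apply[OF cat_of_cubes_adj_hom \<phi>]
  define f where "f = restrict (\<lambda>x. \<phi> 0 (point x) []) (cube n)"
  have "f \<in> cube n \<rightarrow>\<^sub>E cube p"
  proof
    fix x assume "x \<in> cube n"
    then have "adj_preserving 0 p (\<phi> 0 (point x))"
      using hom[of 0] adj_preserving_point by (auto simp: adj_hom_def)
    then show "f x \<in> cube p" using \<open>x \<in> cube n\<close> adj_preserving_from_0 by (auto simp: f_def)
  qed (simp add: f_def)
  moreover have "cube_less (f x) (f z) \<and> hamming (f x) (f z) = 1"
    if x: "x \<in> cube n" and z: "z \<in> cube n" and "cube_le x z" "hamming x z = 1" for x z
  proof -
    have "cube_less x z" using that hamming_self by (auto simp: cube_less_def)
    then have e: "edge x z \<in> adj_hom 1 n"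
      using adj_preserving_edge x z that by (simp add: adj_hom_def)
    have "f x = \<phi> 1 (edge x z) [False]" "f z = \<phi> 1 (edge x z) [True]"
      using apply_\<phi>[OF _ e] x z by (simp_all add: f_def edge_def cube_1)
    moreover have "adj_preserving 1 p (\<phi> 1 (edge x z))" using hom[of 1] e by (auto simp: adj_hom_def)
    ultimately show ?thesis using adj_preserving_from_1 by metis
  qed
  ultimately have f: "f \<in> adj_hom n p" by (simp add: adj_hom_def adj_preservingI_edges)
  have "cosk_unit adj_hom n f k v b = \<phi> k v b" for k v b
  proof (cases "k \<le> 1 \<and> v \<in> adj_hom k n")
    case True
    then have unit: "cosk_unit adj_hom n f k v = ccomp k f v" by (auto simp: cosk_unit_def)
    have "adj_preserving k p (\<phi> k v)" "adj_preserving k n v"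
      using hom True by (auto simp: adj_hom_def)
    then show ?thesis
    proof (cases "b \<in> cube k")
      case True
      have "cosk_unit adj_hom n f k v b = f (v b)" using True by (simp add: unit ccomp_apply)
      also have "\<dots> = \<phi> k v b"
        using adj_preserving_in_cube[OF \<open>adj_preserving k n v\<close> True] True
          \<open>k \<le> 1 \<and> v \<in> adj_hom k n\<close> apply_\<phi>
        by (simp add: f_def)
      finally show ?thesis .
    qed (simp add: unit ccomp_undefined adj_preserving_undefined)
  next
    case False
    then show ?thesis
      using ext hom[of k] by (auto simp: cosk_unit_def extensional_def PiE_iff)
  qed
  then have "cosk_unit adj_hom n f = \<phi>" by (simp add: fun_eq_iff)
  with f show ?thesis by blast
qed

lemma shell_complete_adj_hom: "shell_complete adj_hom"
  unfolding shell_complete_def bij_betw_def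
  using inj_on_cosk_unit trunc_nat_cosk_unit cosk_unit_adj_hom_onto cat_of_cubes_adj_hom by blast

lemma adj_hom_subset_shell_complete:
  assumes B: "cat_of_cubes B" and S: "shell_complete B"
  shows "adj_hom m n \<subseteq> B m n"
proof (cases "m \<le> 1 \<or> n \<le> 1")
  case True
  then show ?thesis
    using cat_of_cubes_low_dim_eq[OF B] adj_preserving_target_le_1 by (auto simp: adj_hom_def)
next
  case False
  have low: "\<And>k m. k \<le> 1 \<Longrightarrow> B k m = adj_hom k m" using cat_of_cubes_low_dim_eq[OF B] .
  from False have bij: "bij_betw (cosk_unit B m) (B m n) {\<phi>. trunc_nat B m n \<phi>}"
    using S unfolding shell_complete_def by simp
  have inj: "inj_on (cosk_unit B m) (adj_hom m n)"
    using inj_on_cosk_unit[OF cat_of_cubes_adj_hom] by (simp add: cosk_unit_cong[OF low])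
  show ?thesis
  proof
    fix f assume f: "f \<in> adj_hom m n"
    have "trunc_nat B m n (cosk_unit B m f)"
      using trunc_nat_cosk_unit[OF cat_of_cubes_adj_hom f]
      by (simp add: trunc_nat_cong[OF low] cosk_unit_cong[OF low])
    then obtain g where g: "g \<in> B m n" "cosk_unit B m f = cosk_unit B m g"
      using bij unfolding bij_betw_def by blast
    then have "f = g" using inj f cat_of_cubes_subset_adj_hom[OF B] by (blast dest: inj_onD)
    with g show "f \<in> B m n" by simp
  qed
qed

theorem theorem7p8:
  shows "\<exists>A. cat_of_cubes A \<and> shell_complete A \<and>
           (\<forall>B. cat_of_cubes B \<and> shell_complete B \<longrightarrow> (\<forall>m n. A m n \<subseteq> B m n))"
  using cat_of_cubes_adj_hom shell_complete_adj_hom adj_hom_subset_shell_complete by blast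

end
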